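(* Let $k\ge 2$ and let $W\in\mathcal W^2_{5\times(3k+1)}$ be such that rows $W[2],W[3],W[4]$ each contain exactly $2k+1$ filled cells (i.e. $e(W[2])=e(W[3])=e(W[4])=1/3$). Then $e(W[1])\le -5/3$ or $e(W[5])\le -5/3$ (i.e. $W[1]$ or $W[5]$ contains at most $2k-1$ filled cells).
   Context: A 2-dimensional binary word of dimensions $h\times w$ is an $h\times w$ matrix with entries in $\{\square,\blacksquare\}$ (filled cells $\blacksquare$, empty cells $\square$); $|U|_\blacksquare$ is the number of filled cells of $U$. Two cells $(i,j),(i',j')$ are adjacent if $|i-i'|+|j-j'|=1$; the degree of a filled cell is the number of filled cells adjacent to it. $\mathcal W^2_{h\times w}$ is the set of $h\times w$ binary words in which every filled cell has degree at most $2$. $W[i]$ denotes row $i$ of $W$. The excess of an $a\times b$ word $U$ is $e(U)=|U|_\blacksquare-2ab/3$; for a row of length $3k+1$, $e=|\text{row}|_\blacksquare-2(3k+1)/3$. *)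

theory Defs
  imports Complex_Main
begin

(* A 2-dimensional binary word of dimensions h x w is modelled as a predicate
   W :: nat => nat => bool on cells (i,j) with 1 <= i <= h, 1 <= j <= w;
   W i j = True means cell (i,j) is filled. Values outside the grid are ignored. *)
type_synonym word2 = "nat \<Rightarrow> nat \<Rightarrow> bool"

definition cells :: "nat \<Rightarrow> nat \<Rightarrow> (nat \<times> nat) set" where
  "cells h w = {1..h} \<times> {1..w}"

definition adjacent :: "nat \<times> nat \<Rightarrow> nat \<times> nat \<Rightarrow> bool" where
  "adjacent c d \<longleftrightarrow>
     \<bar>int (fst c) - int (fst d)\<bar> + \<bar>int (snd c) - int (snd d)\<bar> = 1"

definition degree :: "nat \<Rightarrow> nat \<Rightarrow> word2 \<Rightarrow> nat \<times> nat \<Rightarrow> nat" where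
  "degree h w W c = card {d \<in> cells h w. W (fst d) (snd d) \<and> adjacent c d}"

definition W2 :: "nat \<Rightarrow> nat \<Rightarrow> word2 set" where
  "W2 h w = {W. \<forall>c \<in> cells h w. W (fst c) (snd c) \<longrightarrow> degree h w W c \<le> 2}"

definition row_count :: "nat \<Rightarrow> word2 \<Rightarrow> nat \<Rightarrow> nat" where
  "row_count w W i = card {j \<in> {1..w}. W i j}"

definition row_excess :: "nat \<Rightarrow> word2 \<Rightarrow> nat \<Rightarrow> real" where
  "row_excess w W i = real (row_count w W i) - 2 * real w / 3"

end

theory Submission
  imports Defs
begin

text \<open>Write B, C, D for rows 2, 3, 4 and n = 3k + 1. Since filled cells have degree at most 2,
  counting the neighbours of all columns of row 3 gives |B| + |D| + 2p \<le> 2n, where p is the number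
  of horizontally adjacent filled pairs in row 3; counting adjacent empty pairs of row 3, the empty
  border columns 0 and n + 1 included, gives n + 1 - 2|C| + p \<ge> 0. For |B| = |C| = |D| = 2k + 1
  the two inequalities add up to 0 \<ge> 0, so both are tight: p = k, the gaps of row 3 are single
  and covered by B and D, and every cell of row 3 has degree exactly 2. As |C| > 2p, some cell of
  row 3 has no horizontal neighbour; it must be an end cell, and the gap next to it is flanked on
  both sides by filled cells of row 2 or of row 4. On that side a discharging argument, in which
  every gap takes over the surplus of its two neighbouring columns, shows that the outer row has at
  most |C| - 2 = 2k - 1 filled cells.\<close>


definition framed :: "nat \<Rightarrow> (nat \<Rightarrow> bool) \<Rightarrow> bool" where
  "framed n P \<longleftrightarrow> (\<forall>j. P j \<longrightarrow> 1 \<le> j \<and> j \<le> n)"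

text \<open>Summing over 0..n+1 includes two columns that are empty in every framed row, so the
  neighbours j - 1 and j + 1 of a column j \<le> n never fall outside the range of summation.\<close>

definition row_sum :: "nat \<Rightarrow> (nat \<Rightarrow> bool) \<Rightarrow> int" where
  "row_sum n P = (\<Sum>j\<le>Suc n. of_bool (P j))"

definition grid_row :: "nat \<Rightarrow> word2 \<Rightarrow> nat \<Rightarrow> nat \<Rightarrow> bool" where
  "grid_row w W i j \<longleftrightarrow> 1 \<le> j \<and> j \<le> w \<and> W i j"

lemma framed_grid_row: "framed w (grid_row w W i)"
  by (simp add: framed_def grid_row_def)

lemma row_sum_grid_row: "row_sum w (grid_row w W i) = int (row_count w W i)"
proof -
  have "row_sum w (grid_row w W i) = int (card ({..Suc w} \<inter> {j. grid_row w W i j}))"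
    unfolding row_sum_def by (intro sum_of_bool_eq finite_atMost)
  also have "{..Suc w} \<inter> {j. grid_row w W i j} = {j \<in> {1..w}. W i j}"
    by (auto simp: grid_row_def)
  finally show ?thesis unfolding row_count_def .
qed

lemma row_sum_interval: "row_sum n (\<lambda>j. 1 \<le> j \<and> j \<le> n) = int n"
proof -
  have "grid_row n (\<lambda>_ _. True) 0 = (\<lambda>j. 1 \<le> j \<and> j \<le> n)"
    by (simp add: grid_row_def fun_eq_iff)
  then show ?thesis
    using row_sum_grid_row[of n "\<lambda>_ _. True" 0] by (simp add: row_count_def flip: atLeastAtMost_iff)
qed

lemma sum_shift_mult:
  fixes f g :: "nat \<Rightarrow> int"
  assumes "f 0 = 0" "g (Suc n) = 0"
  shows "(\<Sum>j\<le>Suc n. f j * g (j - 1)) = (\<Sum>j\<le>Suc n. f (Suc j) * g j)"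
proof -
  have "(\<Sum>j\<le>Suc n. f j * g (j - 1)) = f 0 * g 0 + (\<Sum>j\<le>n. f (Suc j) * g j)"
    by (subst sum.atMost_Suc_shift) simp
  also have "\<dots> = (\<Sum>j\<le>Suc n. f (Suc j) * g j)"
    using assms by simp
  finally show ?thesis .
qed

lemma grid_row_degree:
  assumes W: "W \<in> W2 h w" and i: "1 \<le> i" "i \<le> h" and filled: "grid_row w W i j"
  shows "of_bool (1 < i \<and> grid_row w W (i - 1) j) + of_bool (i < h \<and> grid_row w W (i + 1) j)
       + of_bool (grid_row w W i (j - 1)) + of_bool (grid_row w W i (j + 1)) \<le> (2::int)"
proof -
  define N where "N = {d \<in> cells h w. W (fst d) (snd d) \<and> adjacent (i, j) d}"
  have j: "1 \<le> j" "j \<le> w" "W i j" using filled by (auto simp: grid_row_def)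
  have "card N \<le> 2" using W i j unfolding W2_def degree_def N_def cells_def by auto
  moreover have "finite N" unfolding N_def cells_def by auto
  ultimately have no_three: "\<not> (x \<in> N \<and> y \<in> N \<and> z \<in> N)"
    if "x \<noteq> y" "x \<noteq> z" "y \<noteq> z" for x y z
    using that card_mono[of N "{x, y, z}"] by auto
  have "(i - 1, j) \<in> N" if "1 < i \<and> grid_row w W (i - 1) j"
    using that i j unfolding N_def cells_def adjacent_def grid_row_def by auto
  moreover have "(i + 1, j) \<in> N" if "i < h \<and> grid_row w W (i + 1) j"
    using that i j unfolding N_def cells_def adjacent_def grid_row_def by auto
  moreover have "(i, j - 1) \<in> N" if "grid_row w W i (j - 1)"
    using that i j unfolding N_def cells_def adjacent_def grid_row_def by auto
  moreover have "(i, j + 1) \<in> N" if "grid_row w W i (j + 1)"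
    using that i j unfolding N_def cells_def adjacent_def grid_row_def by auto
  moreover have "i - 1 \<noteq> i + 1" "i - 1 \<noteq> i" "i + 1 \<noteq> i" "j - 1 \<noteq> j" "j + 1 \<noteq> j" "j - 1 \<noteq> j + 1"
    using i j by auto
  ultimately show ?thesis
    using no_three[of "(i - 1, j)" "(i + 1, j)" "(i, j - 1)"] no_three[of "(i - 1, j)" "(i + 1, j)" "(i, j + 1)"]
      no_three[of "(i - 1, j)" "(i, j - 1)" "(i, j + 1)"] no_three[of "(i + 1, j)" "(i, j - 1)" "(i, j + 1)"]
    by (auto simp: of_bool_def)
qed

locale middle_rows =
  fixes n k :: nat and B C D :: "nat \<Rightarrow> bool"
  assumes width: "n = 3 * k + 1"
    and framed: "framed n B" "framed n C" "framed n D"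
    and row_sums: "row_sum n B = 2 * int k + 1" "row_sum n C = 2 * int k + 1"
      "row_sum n D = 2 * int k + 1"
    and degree_B: "B j \<Longrightarrow> of_bool (C j) + of_bool (B (j - 1)) + of_bool (B (j + 1)) \<le> (2::int)"
    and degree_C: "C j \<Longrightarrow>
      of_bool (B j) + of_bool (D j) + of_bool (C (j - 1)) + of_bool (C (j + 1)) \<le> (2::int)"
    and degree_D: "D j \<Longrightarrow> of_bool (C j) + of_bool (D (j - 1)) + of_bool (D (j + 1)) \<le> (2::int)"
begin

sublocale flipped: middle_rows n k D C B
  using width framed row_sums degree_B degree_C degree_D
  by unfold_locales (auto simp: add.commute)

definition adjacent_pairs :: int where
  "adjacent_pairs = (\<Sum>j\<le>n. of_bool (C j) * of_bool (C (Suc j)))"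

definition vertex_slack :: "nat \<Rightarrow> int" where
  "vertex_slack j = 2 * of_bool (1 \<le> j \<and> j \<le> n) - of_bool (B j) - of_bool (D j)
     - of_bool (C j) * (of_bool (C (j - 1)) + of_bool (C (j + 1)))"

definition gap_slack :: "nat \<Rightarrow> int" where
  "gap_slack j = (1 - of_bool (C j)) * (1 - of_bool (C (Suc j)))"

lemma C_outside: "\<not> C 0" "\<not> C (Suc n)"
  using framed(2) by (auto simp: framed_def)

lemma sum_C_neighbours:
  "(\<Sum>j\<le>Suc n. of_bool (C j) * (of_bool (C (j - 1)) + of_bool (C (j + 1)))) = 2 * adjacent_pairs"
proof -
  have "(\<Sum>j\<le>Suc n. of_bool (C j) * of_bool (C (j - 1)) :: int) = adjacent_pairs"
    using sum_shift_mult[of "\<lambda>j. of_bool (C j)" "\<lambda>j. of_bool (C j)" n] C_outside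
    by (simp add: adjacent_pairs_def mult.commute)
  moreover have "(\<Sum>j\<le>Suc n. of_bool (C j) * of_bool (C (j + 1)) :: int) = adjacent_pairs"
    using C_outside by (simp add: adjacent_pairs_def)
  ultimately show ?thesis by (simp add: distrib_left sum.distrib)
qed

lemma vertex_slack_nonneg: "0 \<le> vertex_slack j"
  using degree_C[of j] framed unfolding vertex_slack_def framed_def
  by (cases "C j"; cases "B j"; cases "D j") auto

lemma sum_vertex_slack: "(\<Sum>j\<le>Suc n. vertex_slack j) = 2 * int k - 2 * adjacent_pairs"
proof -
  have "(\<Sum>j\<le>Suc n. vertex_slack j) = 2 * row_sum n (\<lambda>j. 1 \<le> j \<and> j \<le> n)
      - row_sum n B - row_sum n D - 2 * adjacent_pairs"
    unfolding vertex_slack_def row_sum_def sum_C_neighbours[symmetric]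
    by (simp add: sum_subtractf sum_distrib_left del: sum.atMost_Suc)
  then show ?thesis using row_sums row_sum_interval width by simp
qed

lemma sum_gap_slack: "(\<Sum>j\<le>n. gap_slack j) = adjacent_pairs - int k"
proof -
  have "(\<Sum>j\<le>n. of_bool (C j) :: int) = row_sum n C"
    using C_outside by (simp add: row_sum_def)
  moreover have "(\<Sum>j\<le>n. of_bool (C (Suc j)) :: int) = row_sum n C"
    using C_outside by (simp add: row_sum_def sum.atMost_Suc_shift del: sum.atMost_Suc)
  moreover have "(\<Sum>j\<le>n. gap_slack j) = (\<Sum>j\<le>n. 1) - (\<Sum>j\<le>n. of_bool (C j))
      - (\<Sum>j\<le>n. of_bool (C (Suc j))) + adjacent_pairs"
    unfolding gap_slack_def adjacent_pairs_def
    by (simp add: sum.distrib sum_subtractf algebra_simps)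
  ultimately show ?thesis using row_sums width by simp
qed

lemma slacks_vanish: "j \<le> Suc n \<Longrightarrow> vertex_slack j = 0" "j \<le> n \<Longrightarrow> gap_slack j = 0"
proof -
  have gap_slack_nonneg: "0 \<le> gap_slack j" for j
    by (simp add: gap_slack_def)
  have "0 \<le> (\<Sum>j\<le>Suc n. vertex_slack j)" "0 \<le> (\<Sum>j\<le>n. gap_slack j)"
    using vertex_slack_nonneg gap_slack_nonneg by (simp_all add: sum_nonneg del: sum.atMost_Suc)
  then have "(\<Sum>j\<le>Suc n. vertex_slack j) = 0" "(\<Sum>j\<le>n. gap_slack j) = 0"
    using sum_vertex_slack sum_gap_slack by linarith+
  then show "j \<le> Suc n \<Longrightarrow> vertex_slack j = 0" "j \<le> n \<Longrightarrow> gap_slack j = 0"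
    using vertex_slack_nonneg gap_slack_nonneg
    by (simp_all add: sum_nonneg_eq_0_iff del: sum.atMost_Suc)
qed

lemma adjacent_pairs_eq: "adjacent_pairs = int k"
  using sum_gap_slack slacks_vanish(2) by simp

lemma gap_imp_B_D: "1 \<le> j \<Longrightarrow> j \<le> n \<Longrightarrow> \<not> C j \<Longrightarrow> B j \<and> D j"
  using slacks_vanish(1)[of j] unfolding vertex_slack_def
  by (cases "B j"; cases "D j") auto

lemma degree_C_eq: "C j \<Longrightarrow>
    of_bool (B j) + of_bool (D j) + of_bool (C (j - 1)) + of_bool (C (j + 1)) = (2::int)"
proof -
  assume "C j"
  then have "j \<le> Suc n" using framed(2) unfolding framed_def by (metis le_SucI)
  then have "vertex_slack j = 0" by (rule slacks_vanish(1))
  then show ?thesis using \<open>C j\<close> framed(2) unfolding vertex_slack_def framed_def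
    by (cases "C (j - 1)"; cases "C (j + 1)") auto
qed

lemma no_adjacent_gaps: "j \<le> n \<Longrightarrow> C j \<or> C (Suc j)"
  using slacks_vanish(2)[of j] unfolding gap_slack_def by auto

lemma isolated_exists: "\<exists>j. C j \<and> \<not> C (j - 1) \<and> \<not> C (j + 1)"
proof (rule ccontr)
  assume "\<nexists>j. C j \<and> \<not> C (j - 1) \<and> \<not> C (j + 1)"
  then have "of_bool (C j) \<le> of_bool (C j) * (of_bool (C (j - 1)) + of_bool (C (j + 1)) :: int)" for j
    by (cases "C j"; cases "C (j - 1)"; cases "C (j + 1)") auto
  then have "row_sum n C \<le> 2 * adjacent_pairs"
    unfolding row_sum_def sum_C_neighbours[symmetric] by (intro sum_mono)
  then show False
    using row_sums(2) adjacent_pairs_eq by simp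
qed

lemma isolated_B_D: "C j \<Longrightarrow> \<not> C (j - 1) \<Longrightarrow> \<not> C (j + 1) \<Longrightarrow> B j \<and> D j"
  using degree_C_eq[of j] by (cases "B j"; cases "D j") auto

lemma isolated_at_end:
  assumes "C j" "\<not> C (j - 1)" "\<not> C (j + 1)"
  shows "j = 1 \<or> j = n"
proof (rule ccontr)
  assume "\<not> (j = 1 \<or> j = n)"
  then have "2 \<le> j" "j + 1 \<le> n"
    using assms(1) framed(2) by (auto simp: framed_def)
  then have "B (j - 1)" "B (j + 1)"
    using gap_imp_B_D[of "j - 1"] gap_imp_B_D[of "j + 1"] assms by auto
  moreover have "B j"
    using isolated_B_D assms by blast
  ultimately show False
    using degree_B[of j] assms(1) by simp
qed

lemma B_or_D_beside_gap:
  assumes "C f" "\<not> C g" "C h" "{f - 1, f + 1} = {g, h}"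
  shows "B f \<or> D f"
proof -
  have "of_bool (C (f - 1)) + of_bool (C (f + 1)) = (1::int)"
    using assms(2-4) by (auto simp: doubleton_eq_iff)
  then show ?thesis
    using degree_C_eq[OF assms(1)] by (cases "B f"; cases "D f") auto
qed

lemma flanked_gap_exists:
  assumes "1 \<le> k"
  shows "\<exists>g. 1 \<le> g \<and> g \<le> n \<and> \<not> C g \<and> (B (g - 1) \<and> B (g + 1) \<or> D (g - 1) \<and> D (g + 1))"
proof -
  have n: "4 \<le> n" using assms width by simp
  obtain e where e: "C e" "\<not> C (e - 1)" "\<not> C (e + 1)"
    using isolated_exists by blast
  then have "B e \<and> D e" using isolated_B_D by blast
  from isolated_at_end[OF e] show ?thesis
  proof
    assume "e = 1"
    then have "\<not> C 2" using e(3) by (simp add: numeral_2_eq_2)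
    moreover have "C 3" using no_adjacent_gaps[of 2] \<open>\<not> C 2\<close> n by simp
    moreover have "C 4" using isolated_at_end[of 3] \<open>\<not> C 2\<close> \<open>C 3\<close> n by fastforce
    ultimately have "B 3 \<or> D 3" using B_or_D_beside_gap[of 3 2 4] by simp
    then show ?thesis using \<open>B e \<and> D e\<close> \<open>e = 1\<close> \<open>\<not> C 2\<close> n
      by (intro exI[of _ 2]) auto
  next
    assume "e = n"
    then have "\<not> C (n - 1)" using e(2) by simp
    moreover have "C (n - 2)"
      using no_adjacent_gaps[of "n - 2"] \<open>\<not> C (n - 1)\<close> n by (simp add: Suc_diff_Suc numeral_2_eq_2)
    moreover have "C (n - 3)"
    proof (rule ccontr)
      assume "\<not> C (n - 3)"
      moreover have "n - 2 - 1 = n - 3" "n - 2 + 1 = n - 1" using n by auto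
      ultimately show False
        using isolated_at_end[of "n - 2"] \<open>\<not> C (n - 1)\<close> \<open>C (n - 2)\<close> n by auto
    qed
    moreover have "{n - 2 - 1, n - 2 + 1} = {n - 1, n - 3}" using n by auto
    ultimately have "B (n - 2) \<or> D (n - 2)"
      using B_or_D_beside_gap[of "n - 2" "n - 1" "n - 3"] by blast
    moreover have "n - 1 - 1 = n - 2" "n - 1 + 1 = n" using n by auto
    ultimately show ?thesis using \<open>B e \<and> D e\<close> \<open>e = n\<close> \<open>\<not> C (n - 1)\<close> n
      by (intro exI[of _ "n - 1"]) auto
  qed
qed

end

locale outer_rows =
  fixes n :: nat and A B C :: "nat \<Rightarrow> bool"
  assumes framed: "framed n A" "framed n C"
    and degree_A: "A j \<Longrightarrow> of_bool (B j) + of_bool (A (j - 1)) + of_bool (A (j + 1)) \<le> (2::int)"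
    and degree_B: "B j \<Longrightarrow>
      of_bool (A j) + of_bool (C j) + of_bool (B (j - 1)) + of_bool (B (j + 1)) \<le> (2::int)"
    and gap_imp_B: "1 \<le> j \<Longrightarrow> j \<le> n \<Longrightarrow> \<not> C j \<Longrightarrow> B j"
    and no_adjacent_gaps: "j \<le> n \<Longrightarrow> C j \<or> C (Suc j)"
    and isolated_at_end: "C j \<Longrightarrow> \<not> C (j - 1) \<Longrightarrow> \<not> C (j + 1) \<Longrightarrow> j = 1 \<or> j = n"
begin

definition gap :: "nat \<Rightarrow> bool" where
  "gap j \<longleftrightarrow> 1 \<le> j \<and> j \<le> n \<and> \<not> C j"

definition surplus :: "nat \<Rightarrow> int" where
  "surplus j = of_bool (A j) - of_bool (C j)"

text \<open>A gap j collects the surplus of its neighbours j - 1 and j + 1 (never gaps themselves),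
  plus 2 if both are covered by B; every other column keeps its own surplus. The transfers cancel
  in the total, while each charge is non-positive by the degree bounds.\<close>

definition charge :: "nat \<Rightarrow> int" where
  "charge j = of_bool (gap j) * (2 * of_bool (B (j - 1) \<and> B (j + 1)) + surplus (j - 1) + surplus (j + 1))
     + surplus j * (1 - of_bool (gap (j - 1)) - of_bool (gap (j + 1)))"

lemma gap_neighbourhood:
  assumes "gap j"
  shows "2 \<le> j" "j + 1 \<le> n" "C (j - 1)" "C (j + 1)" "B j"
proof -
  have "C 1" "C n"
    using no_adjacent_gaps[of 0] no_adjacent_gaps[of n] framed(2) by (auto simp: framed_def)
  then have "j \<noteq> 1" "j \<noteq> n"
    using assms by (auto simp: gap_def)
  then show "2 \<le> j" "j + 1 \<le> n"
    using assms by (auto simp: gap_def)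
  then show "C (j - 1)" "C (j + 1)"
    using no_adjacent_gaps[of "j - 1"] no_adjacent_gaps[of j] assms by (auto simp: gap_def)
  show "B j"
    using gap_imp_B assms by (simp add: gap_def)
qed

lemma surplus_nonpos: "\<not> gap j \<Longrightarrow> surplus j \<le> 0"
  using framed(1) by (auto simp: gap_def surplus_def framed_def)

lemma charge_nonpos: "charge j \<le> 0"
proof (cases "gap j")
  case True
  note nb = gap_neighbourhood[OF True]
  have "\<not> gap (j - 1)" "\<not> gap (j + 1)" "\<not> C j"
    using nb True by (auto simp: gap_def)
  moreover have "B (j - 1) \<Longrightarrow> \<not> A (j - 1)"
    using degree_B[of "j - 1"] nb by (auto simp: of_bool_def split: if_splits)
  moreover have "B (j + 1) \<Longrightarrow> \<not> A (j + 1)"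
    using degree_B[of "j + 1"] nb by (auto simp: of_bool_def split: if_splits)
  moreover have "B (j - 1) \<Longrightarrow> B (j + 1) \<Longrightarrow> \<not> A j"
    using degree_B[of j] nb by (auto simp: of_bool_def split: if_splits)
  moreover have "A j \<Longrightarrow> \<not> (A (j - 1) \<and> A (j + 1))"
    using degree_A[of j] nb by auto
  ultimately show ?thesis
    using True nb unfolding charge_def surplus_def
    by (cases "A (j - 1)"; cases "A j"; cases "A (j + 1)"; cases "B (j - 1)"; cases "B (j + 1)") auto
next
  case False
  have "\<not> (gap (j - 1) \<and> gap (j + 1))"
  proof
    assume "gap (j - 1) \<and> gap (j + 1)"
    then have "1 < j" "j < n" "C j" "\<not> C (j - 1)" "\<not> C (j + 1)"
      using False by (auto simp: gap_def)
    then show False using isolated_at_end by fastforce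
  qed
  then show ?thesis
    using False surplus_nonpos[OF False] unfolding charge_def
    by (auto simp: mult_nonpos_nonneg)
qed

lemma sum_charge:
  "(\<Sum>j\<le>Suc n. charge j)
     = 2 * (\<Sum>j\<le>Suc n. of_bool (gap j \<and> B (j - 1) \<and> B (j + 1))) + row_sum n A - row_sum n C"
proof -
  let ?g = "\<lambda>j. of_bool (gap j) :: int"
  have ends: "?g 0 = 0" "?g (Suc n) = 0" "surplus 0 = 0" "surplus (Suc n) = 0"
    using framed by (auto simp: gap_def surplus_def framed_def)
  have "(\<Sum>j\<le>Suc n. ?g j * surplus (j - 1)) = (\<Sum>j\<le>Suc n. surplus j * ?g (j + 1))"
    using sum_shift_mult[of ?g surplus n] ends by (simp add: mult.commute)
  moreover have "(\<Sum>j\<le>Suc n. ?g j * surplus (j + 1)) = (\<Sum>j\<le>Suc n. surplus j * ?g (j - 1))"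
    using sum_shift_mult[of surplus ?g n] ends by (simp add: mult.commute)
  moreover have "(\<Sum>j\<le>Suc n. surplus j) = row_sum n A - row_sum n C"
    by (simp add: surplus_def row_sum_def sum_subtractf del: sum.atMost_Suc)
  ultimately show ?thesis
    unfolding charge_def
    by (simp add: sum.distrib sum_subtractf sum_distrib_left algebra_simps of_bool_conj
        del: sum.atMost_Suc sum_mult_of_bool_eq sum_of_bool_mult_eq)
qed

lemma row_sum_deficit:
  assumes "gap g" "B (g - 1)" "B (g + 1)"
  shows "row_sum n A \<le> row_sum n C - 2"
proof -
  have "g \<in> {..Suc n}"
    using assms(1) by (simp add: gap_def)
  then have "1 \<le> (\<Sum>j\<le>Suc n. of_bool (gap j \<and> B (j - 1) \<and> B (j + 1)) :: int)"
    using assms member_le_sum[of g "{..Suc n}" "\<lambda>j. of_bool (gap j \<and> B (j - 1) \<and> B (j + 1)) :: int"]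
    by (simp del: sum.atMost_Suc)
  moreover have "(\<Sum>j\<le>Suc n. charge j) \<le> 0"
    using charge_nonpos by (simp add: sum_nonpos del: sum.atMost_Suc)
  ultimately show ?thesis
    using sum_charge by linarith
qed

end

context middle_rows
begin

lemma outer_row_bound:
  assumes "framed n A"
    and "\<And>j. A j \<Longrightarrow> of_bool (B j) + of_bool (A (j - 1)) + of_bool (A (j + 1)) \<le> (2::int)"
    and "\<And>j. B j \<Longrightarrow>
      of_bool (A j) + of_bool (C j) + of_bool (B (j - 1)) + of_bool (B (j + 1)) \<le> (2::int)"
    and "1 \<le> g" "g \<le> n" "\<not> C g" "B (g - 1)" "B (g + 1)"
  shows "row_sum n A \<le> 2 * int k - 1"
proof -
  interpret outer: outer_rows n A B C
    using assms(1-3) framed(2) gap_imp_B_D no_adjacent_gaps isolated_at_end by unfold_locales auto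
  show ?thesis
    using outer.row_sum_deficit[of g] assms(4-) row_sums(2) by (simp add: outer.gap_def)
qed

end

lemma row_excess_le_neg_five_thirds:
  assumes "int (row_count (3 * k + 1) W i) \<le> 2 * int k - 1"
  shows "row_excess (3 * k + 1) W i \<le> -5/3"
proof -
  have "real (row_count (3 * k + 1) W i) \<le> 2 * real k - 1"
    using assms by linarith
  then show ?thesis
    by (simp add: row_excess_def field_simps)
qed

lemma W2_five_row_degrees:
  assumes "W \<in> W2 5 w"
  defines "R \<equiv> grid_row w W"
  shows "R 1 j \<Longrightarrow> of_bool (R 2 j) + of_bool (R 1 (j - 1)) + of_bool (R 1 (j + 1)) \<le> (2::int)"
    and "R 2 j \<Longrightarrow>
      of_bool (R 1 j) + of_bool (R 3 j) + of_bool (R 2 (j - 1)) + of_bool (R 2 (j + 1)) \<le> (2::int)"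
    and "R 3 j \<Longrightarrow>
      of_bool (R 2 j) + of_bool (R 4 j) + of_bool (R 3 (j - 1)) + of_bool (R 3 (j + 1)) \<le> (2::int)"
    and "R 4 j \<Longrightarrow>
      of_bool (R 5 j) + of_bool (R 3 j) + of_bool (R 4 (j - 1)) + of_bool (R 4 (j + 1)) \<le> (2::int)"
    and "R 5 j \<Longrightarrow> of_bool (R 4 j) + of_bool (R 5 (j - 1)) + of_bool (R 5 (j + 1)) \<le> (2::int)"
proof -
  have index_arith: "(1::nat) + 1 = 2" "(2::nat) - 1 = 1" "(2::nat) + 1 = 3" "(3::nat) - 1 = 2"
    "(3::nat) + 1 = 4" "(4::nat) - 1 = 3" "(4::nat) + 1 = 5" "(5::nat) - 1 = 4"
    by simp_all
  note degree = grid_row_degree[OF assms(1), of _ j, folded R_def]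
  show "R 1 j \<Longrightarrow> of_bool (R 2 j) + of_bool (R 1 (j - 1)) + of_bool (R 1 (j + 1)) \<le> (2::int)"
    using degree[of 1] unfolding index_arith by simp
  show "R 2 j \<Longrightarrow>
      of_bool (R 1 j) + of_bool (R 3 j) + of_bool (R 2 (j - 1)) + of_bool (R 2 (j + 1)) \<le> (2::int)"
    using degree[of 2] unfolding index_arith by simp
  show "R 3 j \<Longrightarrow>
      of_bool (R 2 j) + of_bool (R 4 j) + of_bool (R 3 (j - 1)) + of_bool (R 3 (j + 1)) \<le> (2::int)"
    using degree[of 3] unfolding index_arith by simp
  show "R 4 j \<Longrightarrow>
      of_bool (R 5 j) + of_bool (R 3 j) + of_bool (R 4 (j - 1)) + of_bool (R 4 (j + 1)) \<le> (2::int)"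
    using degree[of 4] unfolding index_arith by (simp add: ac_simps)
  show "R 5 j \<Longrightarrow> of_bool (R 4 j) + of_bool (R 5 (j - 1)) + of_bool (R 5 (j + 1)) \<le> (2::int)"
    using degree[of 5] unfolding index_arith by simp
qed

lemma middle_rows_grid:
  assumes "W \<in> W2 5 (3 * k + 1)"
    and "row_count (3 * k + 1) W 2 = 2 * k + 1" "row_count (3 * k + 1) W 3 = 2 * k + 1"
      "row_count (3 * k + 1) W 4 = 2 * k + 1"
  shows "middle_rows (3 * k + 1) k
    (grid_row (3 * k + 1) W 2) (grid_row (3 * k + 1) W 3) (grid_row (3 * k + 1) W 4)"
proof
  note degree = W2_five_row_degrees[OF assms(1)]
  show "of_bool (grid_row (3 * k + 1) W 3 j) + of_bool (grid_row (3 * k + 1) W 2 (j - 1))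
      + of_bool (grid_row (3 * k + 1) W 2 (j + 1)) \<le> (2::int)" if "grid_row (3 * k + 1) W 2 j" for j
    using degree(2)[OF that] by (cases "grid_row (3 * k + 1) W 1 j") auto
  show "of_bool (grid_row (3 * k + 1) W 3 j) + of_bool (grid_row (3 * k + 1) W 4 (j - 1))
      + of_bool (grid_row (3 * k + 1) W 4 (j + 1)) \<le> (2::int)" if "grid_row (3 * k + 1) W 4 j" for j
    using degree(4)[OF that] by (cases "grid_row (3 * k + 1) W 5 j") auto
qed (use W2_five_row_degrees(3)[OF assms(1)] assms(2-4) in \<open>simp_all add: framed_grid_row row_sum_grid_row\<close>)

theorem mainTheorem13:
  fixes k :: nat and W :: word2
  assumes "k \<ge> 2"
    and "W \<in> W2 5 (3*k+1)"
    and "row_count (3*k+1) W 2 = 2*k+1"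
    and "row_count (3*k+1) W 3 = 2*k+1"
    and "row_count (3*k+1) W 4 = 2*k+1"
  shows "row_excess (3*k+1) W 1 \<le> -5/3 \<or> row_excess (3*k+1) W 5 \<le> -5/3"
proof -
  define n where "n = 3 * k + 1"
  define R where "R = grid_row n W"
  interpret middle_rows n k "R 2" "R 3" "R 4"
    using middle_rows_grid[OF assms(2-5)] by (simp add: R_def n_def)
  obtain g where "1 \<le> g" "g \<le> n" "\<not> R 3 g" "R 2 (g - 1) \<and> R 2 (g + 1) \<or> R 4 (g - 1) \<and> R 4 (g + 1)"
    using flanked_gap_exists assms(1) by auto
  moreover note degree = W2_five_row_degrees[OF assms(2)[folded n_def], folded R_def]
  moreover have "framed n (R i)" for i
    by (simp add: R_def framed_grid_row)
  ultimately have "row_sum n (R 1) \<le> 2 * int k - 1 \<or> row_sum n (R 5) \<le> 2 * int k - 1"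
    using outer_row_bound[of "R 1" g] flipped.outer_row_bound[of "R 5" g] by blast
  then show ?thesis
    unfolding R_def row_sum_grid_row n_def by (meson row_excess_le_neg_five_thirds)
qed

end
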